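(* Let $H$ be a real Hilbert space with inner product $(\cdot,\cdot)$ and norm $\|\cdot\|$, let $G:H\to H$ be a bounded, self-adjoint, positive definite linear operator, and let $\bar u,\epsilon\in H$ with $\|\epsilon\|\le\epsilon_0$. Let $\alpha>0$ and let $(u_j)_{j\ge0}$ be the Mitlar iterates with data $\bar u$: $[(1-\alpha)G+\alpha I]u_0=\bar u$ and $[(1-\alpha)G+\alpha I](u_j-u_{j-1})=\bar u-Gu_{j-1}$ for $j\ge1$. Define the noisy functional $E_\epsilon(v)=\frac12(Gv,v)-(\bar u+\epsilon,v)$ for $v\in H$. If for some $j\ge0$ we have $u_{j+1}\neq u_j$ and $$\frac{\epsilon_0}{\|u_{j+1}-u_j\|}\le\alpha\le\frac12,$$ then $E_\epsilon(u_{j+1})\le E_\epsilon(u_j)$.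
   Context: This is the setting of the noisy deconvolution problem $Gu=\bar u+\epsilon$, whose solution $u$ is the minimizer of $E_\epsilon$. *)

theory Defs
  imports "HOL-Analysis.Analysis"
begin

definition E_noisy :: "('a::real_inner \<Rightarrow> 'a) \<Rightarrow> 'a \<Rightarrow> 'a \<Rightarrow> 'a \<Rightarrow> real" where
  "E_noisy G ubar eps v = (1/2) * inner (G v) v - inner (ubar + eps) v"

definition mitlar_iterates :: "('a::real_vector \<Rightarrow> 'a) \<Rightarrow> real \<Rightarrow> 'a \<Rightarrow> (nat \<Rightarrow> 'a) \<Rightarrow> bool" where
  "mitlar_iterates G \<alpha> ubar u \<longleftrightarrow>
     (1 - \<alpha>) *\<^sub>R G (u 0) + \<alpha> *\<^sub>R u 0 = ubar \<and>
     (\<forall>j\<ge>1. (1 - \<alpha>) *\<^sub>R G (u j - u (j - 1)) + \<alpha> *\<^sub>R (u j - u (j - 1)) = ubar - G (u (j - 1)))"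

end

theory Submission
  imports Defs
begin

text \<open>Write \<open>d = u (j+1) - u j\<close>. By the Mitlar equation,
  \<open>(ubar - G (u j), d) = (1-\<alpha>)(Gd,d) + \<alpha>\<parallel>d\<parallel>\<^sup>2\<close>, so the energy changes by
  \<open>(\<alpha> - 1/2)(Gd,d) - \<alpha>\<parallel>d\<parallel>\<^sup>2 - (eps,d)\<close>. The first term is non-positive since
  \<open>\<alpha> \<le> 1/2\<close>, and the noise term is absorbed by the second because
  \<open>\<parallel>eps\<parallel> \<le> eps0 \<le> \<alpha>\<parallel>d\<parallel>\<close>.\<close>

lemma E_noisy_add:
  assumes "linear G" and "\<And>x y. inner (G x) y = inner x (G y)"
  shows "E_noisy G ubar eps (w + d) - E_noisy G ubar eps w
           = inner (G w - ubar - eps) d + (1/2) * inner (G d) d"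
proof -
  have "inner (G d) w = inner (G w) d"
    using assms(2)[of d w] by (simp add: inner_commute)
  then show ?thesis
    by (simp add: E_noisy_def linear_add[OF assms(1)] inner_add_left inner_add_right
        inner_diff_left algebra_simps)
qed

lemma mitlar_iterates_Suc:
  assumes "mitlar_iterates G \<alpha> ubar u"
  shows "(1 - \<alpha>) *\<^sub>R G (u (Suc j) - u j) + \<alpha> *\<^sub>R (u (Suc j) - u j) = ubar - G (u j)"
  using assms unfolding mitlar_iterates_def by (metis diff_Suc_1 le_add1 plus_1_eq_Suc)

lemma E_noisy_relaxed_step:
  assumes "linear G" and "\<And>x y. inner (G x) y = inner x (G y)"
    and step: "(1 - \<alpha>) *\<^sub>R G d + \<alpha> *\<^sub>R d = ubar - G w"
  shows "E_noisy G ubar eps (w + d) - E_noisy G ubar eps w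
           = (\<alpha> - 1/2) * inner (G d) d - \<alpha> * inner d d - inner eps d"
proof -
  have "inner (ubar - G w) d = (1 - \<alpha>) * inner (G d) d + \<alpha> * inner d d"
    unfolding step[symmetric] by (simp add: inner_add_left)
  then show ?thesis
    using E_noisy_add[OF assms(1,2), of ubar eps w d] by (simp add: inner_diff_left algebra_simps)
qed

lemma inner_noise_le:
  fixes eps d :: "'a::real_inner"
  assumes "norm eps \<le> eps0" and "eps0 \<le> \<alpha> * norm d"
  shows "- inner eps d \<le> \<alpha> * inner d d"
proof -
  have "- inner eps d \<le> norm eps * norm d"
    using Cauchy_Schwarz_ineq2[of eps d] by linarith
  also have "\<dots> \<le> \<alpha> * norm d * norm d"
    using assms by (simp add: mult_right_mono)
  also have "\<dots> = \<alpha> * inner d d"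
    by (simp add: power2_eq_square[symmetric] power2_norm_eq_inner)
  finally show ?thesis .
qed

theorem mainTheorem10:
  fixes G :: "'a::{real_inner, complete_space} \<Rightarrow> 'a"
    and ubar eps :: 'a and eps0 \<alpha> :: real and u :: "nat \<Rightarrow> 'a" and j :: nat
  assumes "bounded_linear G"
    and "\<And>x y. inner (G x) y = inner x (G y)"
    and "\<And>x. x \<noteq> 0 \<Longrightarrow> inner (G x) x > 0"
    and "norm eps \<le> eps0"
    and "\<alpha> > 0"
    and "mitlar_iterates G \<alpha> ubar u"
    and "u (Suc j) \<noteq> u j"
    and "eps0 / norm (u (Suc j) - u j) \<le> \<alpha>"
    and "\<alpha> \<le> 1/2"
  shows "E_noisy G ubar eps (u (Suc j)) \<le> E_noisy G ubar eps (u j)"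
proof -
  define d where "d = u (Suc j) - u j"
  have d_pos: "norm d > 0" and "d \<noteq> 0" using assms(7) by (simp_all add: d_def)
  have u_Suc: "u (Suc j) = u j + d" by (simp add: d_def)
  have "linear G" using assms(1) by (rule bounded_linear.linear)
  have "E_noisy G ubar eps (u j + d) - E_noisy G ubar eps (u j)
          = (\<alpha> - 1/2) * inner (G d) d - \<alpha> * inner d d - inner eps d"
    using E_noisy_relaxed_step[OF \<open>linear G\<close> assms(2)] mitlar_iterates_Suc[OF assms(6), of j]
    unfolding d_def[symmetric] by blast
  moreover have "(\<alpha> - 1/2) * inner (G d) d \<le> 0"
    using assms(3)[OF \<open>d \<noteq> 0\<close>] assms(9) by (simp add: mult_nonpos_nonneg)
  moreover have "- inner eps d \<le> \<alpha> * inner d d"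
    using assms(4) assms(8) d_pos by (intro inner_noise_le) (simp_all add: d_def divide_le_eq)
  ultimately show ?thesis unfolding u_Suc by linarith
qed

end
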